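(* Let $d\ge2$ and let $Q$ be a qplex whose set of extreme points forms a single orbit under the action $q\mapsto Rq$ of its preservation group $\mathcal{G}(Q)$. Then $\mathcal{G}(Q)$ is a strongly maximal stochastic subgroup of $\mathrm{O}(d^2)$.
   Context: Fix an integer $d\ge 2$. $\mathrm{O}(d^2)$ is the group of real orthogonal $d^2\times d^2$ matrices. $\langle\cdot,\cdot\rangle$ is the standard inner product on $\mathbb{R}^{d^2}$, $\|\cdot\|$ the Euclidean norm; $\overline{\mathrm{conv}}$ denotes closed convex hull. $\Delta=\{p\in\mathbb{R}^{d^2}: p(i)\ge0,\ \sum_ip(i)=1\}$; $H=\{u\in\mathbb{R}^{d^2}:\sum_i u(i)=1\}$; $c=(1/d^2,\dots,1/d^2)$. For $A\subseteq H$ the polar is $A^*=\{u\in H:\langle u,v\rangle\ge\frac{1}{d(d+1)}\ \forall v\in A\}$. Out-ball $B_{\rm o}=\{u\in H:\|u-c\|\le r_{\rm o}\}$, $r_{\rm o}^2=\frac{d-1}{d^2(d+1)}$. A qplex is a set $Q\subseteq\Delta\cap B_{\rm o}$ with $Q^*=Q$. A measurement is an array $r(i|j)\ge0$ with $\sum_i r(i|j)=1$ for every $j$; for $q\in Q$, $q_r(i)=\sum_j[(d+1)q(j)-\frac1d]r(i|j)$; it is $Q$-preserving if $\{q_r:q\in Q\}=Q$; its stretched measurement matrix is $R_{ij}=(d+1)r(i|j)-\frac1d\sum_k r(i|k)$. The preservation group $\mathcal{G}(Q)$ is the set of stretched measurement matrices of $Q$-preserving measurements. A subgroup $\mathcal{G}\subseteq\mathrm{O}(d^2)$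 is stochastic if every $R\in\mathcal{G}$ satisfies $R_{ij}\ge-\frac1d$ for all $i,j$ and $Rc=c$. For $R\in\mathcal{G}$ set $s^R_i(j)=\frac{dR_{ij}+1}{d(d+1)}$; the orbital germ of $\mathcal{G}$ is $\{s^R_i: R\in\mathcal{G},\ i=1,\dots,d^2\}$. A stochastic subgroup is maximal if it is not contained in any strictly larger stochastic subgroup, and strongly maximal if it is maximal and the closed convex hull of its orbital germ is a qplex. *)

theory Defs
  imports "HOL-Analysis.Analysis"
begin

text \<open>Vectors in R^(d^2) are modelled as real^'n with CARD('n) = d^2;
  d^2 x d^2 matrices as real^'n^'n.\<close>

definition simplexQ :: "(real^'n) set" where
  "simplexQ = {p. (\<forall>i. p$i \<ge> 0) \<and> (\<Sum>i\<in>UNIV. p$i) = 1}"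

definition hypH :: "(real^'n) set" where
  "hypH = {u. (\<Sum>i\<in>UNIV. u$i) = 1}"

definition centerC :: "real^'n" where
  "centerC = (\<chi> i. 1 / real CARD('n))"

definition polarQ :: "nat \<Rightarrow> (real^'n) set \<Rightarrow> (real^'n) set" where
  "polarQ d A = {u \<in> hypH. \<forall>v\<in>A. inner u v \<ge> 1 / (real d * (real d + 1))}"

definition r_out :: "nat \<Rightarrow> real" where
  "r_out d = sqrt ((real d - 1) / ((real d)^2 * (real d + 1)))"

definition outball :: "nat \<Rightarrow> (real^'n) set" where
  "outball d = {u \<in> hypH. norm (u - centerC) \<le> r_out d}"

definition qplex :: "nat \<Rightarrow> (real^'n) set \<Rightarrow> bool" where
  "qplex d Q \<longleftrightarrow> Q \<subseteq> simplexQ \<inter> outball d \<and> polarQ d Q = Q"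

text \<open>A measurement: r i j stands for r(i|j).\<close>
definition measurement :: "('n::finite \<Rightarrow> 'n \<Rightarrow> real) \<Rightarrow> bool" where
  "measurement r \<longleftrightarrow> (\<forall>i j. r i j \<ge> 0) \<and> (\<forall>j. (\<Sum>i\<in>UNIV. r i j) = 1)"

definition meas_apply :: "nat \<Rightarrow> ('n::finite \<Rightarrow> 'n \<Rightarrow> real) \<Rightarrow> real^'n \<Rightarrow> real^'n" where
  "meas_apply d r q = (\<chi> i. \<Sum>j\<in>UNIV. ((real d + 1) * q$j - 1 / real d) * r i j)"

definition Q_preserving :: "nat \<Rightarrow> (real^'n) set \<Rightarrow> ('n \<Rightarrow> 'n \<Rightarrow> real) \<Rightarrow> bool" where
  "Q_preserving d Q r \<longleftrightarrow> measurement r \<and> (meas_apply d r) ` Q = Q"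

definition stretched :: "nat \<Rightarrow> ('n::finite \<Rightarrow> 'n \<Rightarrow> real) \<Rightarrow> real^'n^'n" where
  "stretched d r = (\<chi> i j. (real d + 1) * r i j - (1 / real d) * (\<Sum>k\<in>UNIV. r i k))"

definition pres_group :: "nat \<Rightarrow> (real^'n) set \<Rightarrow> (real^'n^'n) set" where
  "pres_group d Q = {stretched d r | r. Q_preserving d Q r}"

definition orth_subgroup :: "(real^'n^'n) set \<Rightarrow> bool" where
  "orth_subgroup G \<longleftrightarrow> (\<forall>R\<in>G. orthogonal_matrix R) \<and> mat 1 \<in> G \<and>
     (\<forall>R\<in>G. \<forall>S\<in>G. R ** S \<in> G) \<and> (\<forall>R\<in>G. matrix_inv R \<in> G)"

definition stochastic :: "nat \<Rightarrow> (real^'n^'n) set \<Rightarrow> bool" where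
  "stochastic d G \<longleftrightarrow> orth_subgroup G \<and>
     (\<forall>R\<in>G. (\<forall>i j. R$i$j \<ge> - 1 / real d) \<and> R *v centerC = centerC)"

definition orbital_germ :: "nat \<Rightarrow> (real^'n^'n) set \<Rightarrow> (real^'n) set" where
  "orbital_germ d G = {(\<chi> j. (real d * R$i$j + 1) / (real d * (real d + 1))) | R i. R \<in> G}"

definition maximal_stochastic :: "nat \<Rightarrow> (real^'n^'n) set \<Rightarrow> bool" where
  "maximal_stochastic d G \<longleftrightarrow> stochastic d G \<and>
     (\<forall>G'. stochastic d G' \<and> G \<subseteq> G' \<longrightarrow> G' = G)"

definition strongly_maximal :: "nat \<Rightarrow> (real^'n^'n) set \<Rightarrow> bool" where
  "strongly_maximal d G \<longleftrightarrow> maximal_stochastic d G \<and>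
     qplex d (closure (convex hull (orbital_germ d G)))"

end

(* The points u_k = (e_k + 1/d)/(d + 1) have the largest norm permitted by the out-ball and
   pair with every point of the simplex to at least 1/(d(d+1)); hence they are extreme points of
   every qplex Q.  A Q-preserving measurement r sends the u_k to its columns and some points q_k
   of Q to the u_k; the stretched matrices R of r and S of the q_k then satisfy RS = 1, while
   both have squared Frobenius norm at most d^2 = tr(RS).  This forces S = R^T, so G(Q) is
   exactly the group of orthogonal maps fixing c and Q.  Its orbital germ consists of the points
   R^T u_i, which lie in Q; since the extreme points form one orbit, which contains u_k, they all
   lie in the germ, and by Krein-Milman the germ spans Q.  Finally, if G' contains G(Q) and is
   stochastic, then for W in G' and an extreme point S u_k one has <W u_k, S u_k> =
   <u_k, W^T S u_k> >= 1/(d(d+1)) by the entry bound, so W u_k lies in Q* = Q; thus W maps the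
   extreme points, hence Q, into Q, and W belongs to G(Q). *)

theory Submission
  imports Defs
begin

declare transpose_matrix_vector [simp del]

lemma norm_vec_power2: "norm (x :: real^'n) ^ 2 = (\<Sum>i\<in>UNIV. (x $ i)^2)"
  unfolding power2_norm_eq_inner inner_vec_def by (simp add: power2_eq_square)

lemma sum_power2_affine:
  fixes x :: "'a \<Rightarrow> real"
  shows "(\<Sum>k\<in>A. (a * x k - c)^2) = a^2 * (\<Sum>k\<in>A. (x k)^2) - 2 * a * c * (\<Sum>k\<in>A. x k) + real (card A) * c^2"
proof -
  have "(\<Sum>k\<in>A. (a * x k - c)^2) = (\<Sum>k\<in>A. a^2 * (x k)^2 - (2 * a * c) * x k + c^2)"
    by (intro sum.cong refl) (simp add: power2_eq_square algebra_simps)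
  then show ?thesis
    by (simp add: sum.distrib sum_subtractf sum_distrib_left)
qed

lemma norm_power2_convex_combination:
  fixes a b :: "'a::real_inner"
  shows "norm ((1 - t) *\<^sub>R a + t *\<^sub>R b) ^ 2 = (1 - t) * norm a ^ 2 + t * norm b ^ 2 - t * (1 - t) * norm (a - b) ^ 2"
  by (simp add: power2_norm_eq_inner inner_commute algebra_simps)

lemma extreme_point_of_norm_maximal:
  fixes x :: "'a::real_inner"
  assumes "x \<in> S" and "\<And>y. y \<in> S \<Longrightarrow> norm y \<le> norm x"
  shows "x extreme_point_of S"
  unfolding extreme_point_of_def
proof (intro conjI ballI assms(1) notI)
  fix a b assume "a \<in> S" "b \<in> S" "x \<in> open_segment a b"
  then obtain t where "a \<noteq> b" "0 < t" "t < 1" and x: "x = (1 - t) *\<^sub>R a + t *\<^sub>R b"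
    by (auto simp: in_segment)
  have "norm a ^ 2 \<le> norm x ^ 2" "norm b ^ 2 \<le> norm x ^ 2"
    using assms(2) \<open>a \<in> S\<close> \<open>b \<in> S\<close> by (auto intro: power_mono)
  then have "(1 - t) * norm a ^ 2 + t * norm b ^ 2 \<le> (1 - t) * norm x ^ 2 + t * norm x ^ 2"
    using \<open>0 < t\<close> \<open>t < 1\<close> by (intro add_mono mult_left_mono) auto
  moreover have "t * (1 - t) * norm (a - b) ^ 2 > 0"
    using \<open>a \<noteq> b\<close> \<open>0 < t\<close> \<open>t < 1\<close> by simp
  moreover have "norm x ^ 2 = (1 - t) * norm a ^ 2 + t * norm b ^ 2 - t * (1 - t) * norm (a - b) ^ 2"
    unfolding x by (rule norm_power2_convex_combination)
  ultimately show False
    by (simp add: algebra_simps)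
qed

lemma matrix_inv_orthogonal:
  assumes "orthogonal_matrix (M :: real^'n^'n)"
  shows "matrix_inv M = transpose M"
proof -
  have inv: "M ** transpose M = mat 1 \<and> transpose M ** M = mat 1"
    using assms by (simp add: orthogonal_matrix_def)
  then have "M ** matrix_inv M = mat 1"
    unfolding matrix_inv_def by (rule someI_ex[OF exI, THEN conjunct1])
  then have "transpose M ** (M ** matrix_inv M) = transpose M"
    by simp
  with inv show ?thesis
    by (simp add: matrix_mul_assoc)
qed

lemma orthogonal_matrix_transpose_cancel:
  assumes "orthogonal_matrix (M :: real^'n^'n)"
  shows "transpose M *v (M *v x) = x" "M *v (transpose M *v x) = x"
  using assms by (simp_all add: matrix_vector_mul_assoc orthogonal_matrix_def)

text \<open>\<open>\<Sum>i k. (R\<^sub>i\<^sub>k - S\<^sub>k\<^sub>i)\<^sup>2 = \<parallel>R\<parallel>\<^sup>2 + \<parallel>S\<parallel>\<^sup>2 - 2 tr (R S) \<le> 0\<close>.\<close>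

lemma right_inverse_eq_transpose:
  fixes R S :: "real^'n^'n"
  assumes RS: "R ** S = mat 1"
    and R: "(\<Sum>i\<in>UNIV. \<Sum>k\<in>UNIV. (R $ i $ k)^2) \<le> real CARD('n)"
    and S: "(\<Sum>i\<in>UNIV. \<Sum>k\<in>UNIV. (S $ i $ k)^2) \<le> real CARD('n)"
  shows "S = transpose R"
proof -
  have trace: "(\<Sum>i\<in>UNIV. \<Sum>k\<in>UNIV. R $ i $ k * S $ k $ i) = real CARD('n)"
    using RS by (simp add: vec_eq_iff matrix_matrix_mult_def mat_def)
  have "(\<Sum>i\<in>UNIV. \<Sum>k\<in>UNIV. (R $ i $ k - S $ k $ i)^2)
      = (\<Sum>i\<in>UNIV. \<Sum>k\<in>UNIV. (R $ i $ k)^2) + (\<Sum>i\<in>UNIV. \<Sum>k\<in>UNIV. (S $ k $ i)^2)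
        - 2 * (\<Sum>i\<in>UNIV. \<Sum>k\<in>UNIV. R $ i $ k * S $ k $ i)"
    by (simp add: power2_diff sum.distrib sum_subtractf sum_distrib_left mult.assoc)
  also have "(\<Sum>i\<in>UNIV. \<Sum>k\<in>UNIV. (S $ k $ i)^2) = (\<Sum>k\<in>UNIV. \<Sum>i\<in>UNIV. (S $ k $ i)^2)"
    by (rule sum.swap)
  finally have "(\<Sum>i\<in>UNIV. \<Sum>k\<in>UNIV. (R $ i $ k - S $ k $ i)^2) \<le> 0"
    using R S trace by linarith
  then have "(\<Sum>i\<in>UNIV. \<Sum>k\<in>UNIV. (R $ i $ k - S $ k $ i)^2) = 0"
    by (intro antisym sum_nonneg) auto
  then have "R $ i $ k = S $ k $ i" for i k
    by (simp add: sum_nonneg_eq_0_iff sum_nonneg)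
  then show ?thesis
    by (simp add: vec_eq_iff transpose_def)
qed

lemma inner_matrix_vector_mult:
  "inner ((A :: real^'n^'n) *v x) y = inner x (transpose A *v y)"
  by (metis dot_lmul_matrix vector_transpose_matrix)

lemma matrix_vector_mult_centerC_eq_iff:
  "(M :: real^'n^'n) *v centerC = centerC \<longleftrightarrow> (\<forall>i. (\<Sum>k\<in>UNIV. M $ i $ k) = 1)"
  by (simp add: vec_eq_iff matrix_vector_mult_def centerC_def sum_divide_distrib[symmetric])

lemma orthogonal_matrix_column_sum:
  assumes "orthogonal_matrix (M :: real^'n^'n)" "M *v centerC = centerC"
  shows "(\<Sum>i\<in>UNIV. M $ i $ j) = 1"
proof -
  have "transpose M *v centerC = centerC"
    using orthogonal_matrix_transpose_cancel(1)[OF assms(1)] assms(2) by metis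
  then show ?thesis
    by (simp add: matrix_vector_mult_centerC_eq_iff transpose_def)
qed

lemma matrix_vector_mult_hypH:
  assumes "\<And>j. (\<Sum>i\<in>UNIV. (M :: real^'n^'n) $ i $ j) = 1" "x \<in> hypH"
  shows "M *v x \<in> hypH"
proof -
  have "(\<Sum>i\<in>UNIV. (M *v x) $ i) = (\<Sum>i\<in>UNIV. \<Sum>k\<in>UNIV. M $ i $ k * x $ k)"
    by (simp add: matrix_vector_mult_def)
  also have "\<dots> = (\<Sum>k\<in>UNIV. \<Sum>i\<in>UNIV. M $ i $ k * x $ k)"
    by (rule sum.swap)
  also have "\<dots> = (\<Sum>k\<in>UNIV. (\<Sum>i\<in>UNIV. M $ i $ k) * x $ k)"
    by (simp add: sum_distrib_right)
  finally show ?thesis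
    using assms by (simp add: hypH_def)
qed

lemma norm_power2_hypH:
  fixes x :: "real^'n"
  assumes "x \<in> hypH"
  shows "norm x ^ 2 = norm (x - centerC) ^ 2 + 1 / real CARD('n)"
proof -
  have inner_c: "inner y (centerC :: real^'n) = 1 / real CARD('n)" if "y \<in> hypH" for y
    using that by (simp add: inner_vec_def centerC_def hypH_def sum_divide_distrib[symmetric])
  have "(centerC :: real^'n) \<in> hypH"
    by (simp add: hypH_def centerC_def)
  then have "inner (x - centerC) (x - centerC) = inner x x - 1 / real CARD('n)"
    using inner_c[OF assms] inner_c[of centerC]
    by (simp add: inner_diff_left inner_diff_right inner_commute[of centerC x])
  then show ?thesis
    by (simp add: power2_norm_eq_inner)
qed

lemma polarQ_closed_convex: "closed (polarQ d A) \<and> convex (polarQ d A)"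
proof -
  have "polarQ d A = {u. inner (\<chi> i. 1) u = 1} \<inter> (\<Inter>v\<in>A. {u. inner v u \<ge> 1 / (real d * (real d + 1))})"
    by (auto simp: polarQ_def hypH_def inner_vec_def mult.commute)
  then show ?thesis
    by (simp add: closed_Int closed_INT convex_Int convex_INT closed_hyperplane closed_halfspace_ge
        convex_hyperplane convex_halfspace_ge)
qed

lemma qplex_compact_convex:
  assumes "qplex d Q"
  shows "compact Q" "convex Q"
proof -
  have "Q \<subseteq> cball centerC (r_out d)"
    using assms by (auto simp: qplex_def outball_def dist_norm norm_minus_commute)
  then have "bounded Q"
    using bounded_subset bounded_cball by blast
  moreover have "polarQ d Q = Q"
    using assms by (simp add: qplex_def)
  ultimately show "compact Q" "convex Q"
    using polarQ_closed_convex[of d Q] by (simp_all add: compact_eq_bounded_closed)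
qed

definition symmetries :: "(real^'n) set \<Rightarrow> (real^'n^'n) set" where
  "symmetries Q = {M. orthogonal_matrix M \<and> M *v centerC = centerC \<and> (\<lambda>x. M *v x) ` Q = Q}"

lemma mat1_in_symmetries: "mat 1 \<in> symmetries Q"
  by (simp add: symmetries_def orthogonal_matrix_id)

lemma symmetries_mult:
  assumes "M \<in> symmetries Q" "N \<in> symmetries Q"
  shows "M ** N \<in> symmetries Q"
proof -
  have "(\<lambda>x. (M ** N) *v x) ` Q = (\<lambda>x. M *v x) ` ((\<lambda>x. N *v x) ` Q)"
    by (simp add: image_image matrix_vector_mul_assoc)
  with assms show ?thesis
    by (simp add: symmetries_def orthogonal_matrix_mul matrix_vector_mul_assoc[symmetric])
qed

lemma symmetries_transpose:
  assumes "M \<in> symmetries Q"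
  shows "transpose M \<in> symmetries Q"
proof -
  have M: "orthogonal_matrix M" "M *v centerC = centerC" "(\<lambda>x. M *v x) ` Q = Q"
    using assms by (auto simp: symmetries_def)
  have "(\<lambda>x. transpose M *v x) ` Q = (\<lambda>x. transpose M *v x) ` ((\<lambda>x. M *v x) ` Q)"
    using M(3) by simp
  also have "\<dots> = Q"
    by (simp add: image_image orthogonal_matrix_transpose_cancel[OF M(1)])
  finally show ?thesis
    using M(1,2) orthogonal_matrix_transpose_cancel(1)[OF M(1), of centerC]
    by (simp add: symmetries_def)
qed

lemma orbit_symmetries_eq:
  fixes Q :: "(real^'n) set"
  assumes "R0 \<in> symmetries Q" "y = R0 *v x"
  shows "{R *v x | R. R \<in> symmetries Q} = {R *v y | R. R \<in> symmetries Q}"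
proof -
  have R0: "orthogonal_matrix R0"
    using assms(1) by (simp add: symmetries_def)
  have "R *v x = (R ** transpose R0) *v y" for R :: "real^'n^'n"
    using assms(2) orthogonal_matrix_transpose_cancel(1)[OF R0]
    by (simp add: matrix_vector_mul_assoc[symmetric])
  moreover have "R *v y = (R ** R0) *v x" for R :: "real^'n^'n"
    using assms(2) by (simp add: matrix_vector_mul_assoc)
  ultimately show ?thesis
    using assms(1) by (blast intro: symmetries_mult symmetries_transpose)
qed

lemma symmetries_mult_mem:
  assumes "M \<in> symmetries Q" "x \<in> Q"
  shows "M *v x \<in> Q"
  using assms by (auto simp: symmetries_def)

lemma stochastic_memD:
  assumes "stochastic d G" "R \<in> G"
  shows "orthogonal_matrix R" "R *v centerC = centerC" "- 1 / real d \<le> R $ i $ j"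
  using assms by (auto simp: stochastic_def orth_subgroup_def)

lemma stochastic_mult:
  assumes "stochastic d G" "R \<in> G" "S \<in> G"
  shows "R ** S \<in> G"
  using assms by (simp add: stochastic_def orth_subgroup_def)

lemma stochastic_transpose:
  assumes "stochastic d G" "R \<in> G"
  shows "transpose R \<in> G"
  using assms matrix_inv_orthogonal by (metis orth_subgroup_def stochastic_def)

lemma stochastic_hypH:
  assumes "stochastic d G" "R \<in> G" "x \<in> hypH"
  shows "R *v x \<in> hypH"
  using orthogonal_matrix_column_sum[OF stochastic_memD(1,2)[OF assms(1,2)]] assms(3)
  by (rule matrix_vector_mult_hypH)

definition basis_point :: "nat \<Rightarrow> 'n::finite \<Rightarrow> real^'n" where
  "basis_point d k = (\<chi> i. ((if i = k then 1 else 0) + 1 / real d) / (real d + 1))"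

context
  fixes d :: nat
  assumes d_pos: "0 < d" and card_eq: "CARD('n::finite) = d^2"
begin

lemma real_card: "real CARD('n) = real d ^ 2"
  using card_eq by simp

lemma sum_shifted_entries:
  assumes "(\<Sum>k\<in>(UNIV :: 'n set). f k) = 1"
  shows "(\<Sum>k\<in>(UNIV :: 'n set). (f k + 1 / real d) / (real d + 1)) = 1"
proof -
  have "(\<Sum>k\<in>(UNIV :: 'n set). (f k + 1 / real d) / (real d + 1))
      = ((\<Sum>k\<in>UNIV. f k) + real CARD('n) / real d) / (real d + 1)"
    by (simp add: sum_divide_distrib[symmetric] sum.distrib)
  then show ?thesis
    using assms d_pos by (simp add: real_card power2_eq_square)
qed

lemma basis_point_nth:
  "(basis_point d k :: real^'n) $ i = (if i = k then 1 / (real d + 1) else 0) + 1 / (real d * (real d + 1))"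
  by (simp add: basis_point_def add_divide_distrib)

lemma basis_point_scaled:
  "(real d + 1) * (basis_point d k :: real^'n) $ i - 1 / real d = (if i = k then 1 else 0)"
  by (simp add: basis_point_def)

lemma sum_basis_point_index: "(\<Sum>k\<in>UNIV. (basis_point d k :: real^'n) $ i) = 1"
  using sum_shifted_entries[of "\<lambda>k. if i = k then 1 else 0"] by (simp add: basis_point_def)

lemma sum_mult_basis_point:
  "(\<Sum>k\<in>UNIV. f k * (basis_point d j :: real^'n) $ k) = (f j + (\<Sum>k\<in>UNIV. f k) / real d) / (real d + 1)"
proof -
  have "(\<Sum>k\<in>UNIV. f k * (basis_point d j :: real^'n) $ k)
      = (\<Sum>k\<in>UNIV. (if k = j then f k / (real d + 1) else 0) + f k * (1 / (real d * (real d + 1))))"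
    by (intro sum.cong refl) (simp add: basis_point_nth algebra_simps)
  also have "\<dots> = f j / (real d + 1) + (\<Sum>k\<in>UNIV. f k) * (1 / (real d * (real d + 1)))"
    by (simp add: sum.distrib sum_distrib_right sum_divide_distrib)
  also have "\<dots> = (f j + (\<Sum>k\<in>UNIV. f k) / real d) / (real d + 1)"
    by (simp add: add_divide_distrib)
  finally show ?thesis .
qed

lemma basis_point_hypH: "(basis_point d k :: real^'n) \<in> hypH"
  using sum_mult_basis_point[of "\<lambda>_. 1" k] d_pos by (simp add: hypH_def real_card power2_eq_square)

lemma inner_basis_point:
  fixes q :: "real^'n"
  assumes "q \<in> hypH"
  shows "inner (basis_point d k) q = (q $ k + 1 / real d) / (real d + 1)"
  using assms sum_mult_basis_point[of "\<lambda>i. q $ i" k]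
  by (simp add: inner_vec_def hypH_def mult.commute)

lemma matrix_vector_mult_basis_point_nth:
  assumes "\<And>i. (\<Sum>k\<in>UNIV. (M :: real^'n^'n) $ i $ k) = 1"
  shows "(M *v basis_point d j) $ i = (M $ i $ j + 1 / real d) / (real d + 1)"
  using assms sum_mult_basis_point[of "\<lambda>k. M $ i $ k" j] by (simp add: matrix_vector_mult_def)

lemma transpose_mult_basis_point_nth:
  assumes "orthogonal_matrix (M :: real^'n^'n)" "M *v centerC = centerC"
  shows "(transpose M *v basis_point d i) $ j = (M $ i $ j + 1 / real d) / (real d + 1)"
  using matrix_vector_mult_basis_point_nth[of "transpose M"] orthogonal_matrix_column_sum[OF assms]
  by (simp add: transpose_def)

lemma transpose_mult_basis_point:
  assumes "orthogonal_matrix (M :: real^'n^'n)" "M *v centerC = centerC"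
  shows "transpose M *v basis_point d i = (\<chi> j. (real d * M $ i $ j + 1) / (real d * (real d + 1)))"
  using transpose_mult_basis_point_nth[OF assms] d_pos by (simp add: vec_eq_iff divide_simps)

lemma norm_basis_point: "norm (basis_point d k :: real^'n) ^ 2 = 2 / (real d * (real d + 1))"
proof -
  have "norm (basis_point d k :: real^'n) ^ 2 = (\<Sum>i\<in>UNIV. (basis_point d k :: real^'n) $ i * basis_point d k $ i)"
    using norm_vec_power2[of "basis_point d k"] by (simp add: power2_eq_square)
  also have "\<dots> = ((basis_point d k :: real^'n) $ k + 1 / real d) / (real d + 1)"
    using sum_mult_basis_point[of "\<lambda>i. basis_point d k $ i" k] basis_point_hypH[of k]
    by (simp add: hypH_def)
  also have "\<dots> = 2 / (real d * (real d + 1))"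
    using d_pos by (simp add: basis_point_nth divide_simps)
  finally show ?thesis .
qed

lemma norm_outball_le:
  fixes q :: "real^'n"
  assumes "q \<in> outball d"
  shows "norm q ^ 2 \<le> 2 / (real d * (real d + 1))"
proof -
  have "norm (q - centerC) ^ 2 \<le> r_out d ^ 2"
    using assms by (intro power_mono) (auto simp: outball_def)
  also have "r_out d ^ 2 = (real d - 1) / ((real d)^2 * (real d + 1))"
    using d_pos by (simp add: r_out_def)
  finally have "norm q ^ 2 \<le> (real d - 1) / ((real d)^2 * (real d + 1)) + 1 / real d ^ 2"
    using assms norm_power2_hypH[of q] by (simp add: outball_def real_card)
  also have "\<dots> = 2 / (real d * (real d + 1))"
    using d_pos by (simp add: divide_simps power2_eq_square)
  finally show ?thesis .
qed

lemma qplex_memberD: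
  fixes Q :: "(real^'n) set"
  assumes "qplex d Q" "q \<in> Q"
  shows "q \<in> hypH" "q $ i \<ge> 0" "norm q ^ 2 \<le> 2 / (real d * (real d + 1))"
  using assms norm_outball_le[of q] by (auto simp: qplex_def simplexQ_def hypH_def outball_def)

lemma basis_point_in_qplex:
  fixes Q :: "(real^'n) set"
  assumes "qplex d Q"
  shows "basis_point d k \<in> Q"
proof -
  have "1 / (real d * (real d + 1)) \<le> inner (basis_point d k) v" if "v \<in> Q" for v
  proof -
    have "(0 + 1 / real d) / (real d + 1) \<le> (v $ k + 1 / real d) / (real d + 1)"
      using qplex_memberD(2)[OF assms that] d_pos by (intro divide_right_mono) auto
    then show ?thesis
      using inner_basis_point[OF qplex_memberD(1)[OF assms that]] by simp
  qed
  then have "basis_point d k \<in> polarQ d Q"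
    by (simp add: polarQ_def basis_point_hypH)
  with assms show ?thesis
    by (simp add: qplex_def)
qed

lemma basis_point_extreme_point:
  fixes Q :: "(real^'n) set"
  assumes "qplex d Q"
  shows "basis_point d k extreme_point_of Q"
proof (rule extreme_point_of_norm_maximal[OF basis_point_in_qplex[OF assms]])
  fix y assume "y \<in> Q"
  then have "norm y ^ 2 \<le> norm (basis_point d k :: real^'n) ^ 2"
    using qplex_memberD(3)[OF assms] by (simp add: norm_basis_point)
  then show "norm y \<le> norm (basis_point d k)"
    by (simp add: power2_le_iff_abs_le)
qed

lemma meas_apply_eq_stretched:
  fixes q :: "real^'n"
  assumes "q \<in> hypH"
  shows "meas_apply d r q = stretched d r *v q"
proof -
  have "(stretched d r *v q) $ i = meas_apply d r q $ i" for i
  proof -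
    have "(stretched d r *v q) $ i
        = (\<Sum>j\<in>UNIV. (real d + 1) * r i j * q $ j) - (1 / real d) * (\<Sum>k\<in>UNIV. r i k) * (\<Sum>j\<in>UNIV. q $ j)"
      by (simp add: stretched_def matrix_vector_mult_def left_diff_distrib sum_subtractf sum_distrib_left)
    also have "\<dots> = (\<Sum>j\<in>UNIV. ((real d + 1) * q $ j) * r i j - (1 / real d) * r i j)"
      using assms by (simp add: hypH_def sum_subtractf sum_distrib_left sum_divide_distrib mult_ac)
    finally show ?thesis
      by (simp add: meas_apply_def left_diff_distrib)
  qed
  then show ?thesis
    by (simp add: vec_eq_iff)
qed

lemma meas_apply_basis_point: "meas_apply d r (basis_point d k :: real^'n) = (\<chi> i. r i k)"
  by (simp add: vec_eq_iff meas_apply_def basis_point_scaled if_distrib[of "\<lambda>x. x * _"] cong: if_cong)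

lemma stretched_column_sum:
  assumes "\<And>j. (\<Sum>i\<in>UNIV. r i j) = 1"
  shows "(\<Sum>i\<in>UNIV. stretched d r $ i $ (j :: 'n)) = 1"
proof -
  have "(\<Sum>i\<in>UNIV. stretched d r $ i $ j)
      = (real d + 1) * (\<Sum>i\<in>UNIV. r i j) - (1 / real d) * (\<Sum>i\<in>UNIV. \<Sum>k\<in>UNIV. r i k)"
    by (simp add: stretched_def sum_subtractf sum_distrib_left)
  also have "(\<Sum>i\<in>UNIV. \<Sum>k\<in>UNIV. r i k) = (\<Sum>k\<in>UNIV. \<Sum>i\<in>(UNIV :: 'n set). r i k)"
    by (rule sum.swap)
  also have "(real d + 1) * (\<Sum>i\<in>UNIV. r i j) - (1 / real d) * (\<Sum>k\<in>UNIV. \<Sum>i\<in>UNIV. r i k) = 1"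
    using assms d_pos by (simp add: real_card power2_eq_square)
  finally show ?thesis .
qed

lemma matrix_mul_stretched:
  "(M ** stretched d (\<lambda>i k. q k $ i)) $ i $ j
     = (real d + 1) * (M *v q j) $ i - (1 / real d) * (\<Sum>l\<in>UNIV. (M *v q l) $ (i :: 'n))"
proof -
  have "(\<Sum>l\<in>UNIV. (M *v q l) $ i) = (\<Sum>l\<in>UNIV. \<Sum>k\<in>UNIV. M $ i $ k * q l $ k)"
    by (simp add: matrix_vector_mult_def)
  also have "\<dots> = (\<Sum>k\<in>UNIV. \<Sum>l\<in>UNIV. M $ i $ k * q l $ k)"
    by (rule sum.swap)
  also have "\<dots> = (\<Sum>k\<in>UNIV. M $ i $ k * (\<Sum>l\<in>UNIV. q l $ k))"
    by (simp add: sum_distrib_left)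
  finally show ?thesis
    by (simp add: matrix_matrix_mult_def stretched_def matrix_vector_mult_def right_diff_distrib
        sum_subtractf sum_distrib_left mult_ac)
qed

text \<open>Expanding the squares leaves \<open>(d+1)\<^sup>2 \<Sum> r\<^sup>2 - (d+2)/d \<Sum>\<^sub>i A\<^sub>i\<^sup>2\<close> with row sums \<open>A\<^sub>i\<close>;
  the out-ball bounds the first term, and \<open>\<Sum>\<^sub>i A\<^sub>i = d\<^sup>2\<close> bounds the second.\<close>

lemma stretched_frobenius_le:
  assumes sum1: "\<And>k. (\<Sum>i\<in>UNIV. r i k) = 1"
    and sq: "\<And>k. (\<Sum>i\<in>UNIV. (r i k)^2) \<le> 2 / (real d * (real d + 1))"
  shows "(\<Sum>i\<in>UNIV. \<Sum>k\<in>(UNIV :: 'n set). (stretched d r $ i $ k)^2) \<le> real d ^ 2"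
proof -
  define D where "D = real d"
  have D: "D > 0"
    using d_pos by (simp add: D_def)
  define A where "A i = (\<Sum>l\<in>UNIV. r i l)" for i
  define sq_sum where "sq_sum = (\<Sum>i\<in>UNIV. \<Sum>k\<in>(UNIV :: 'n set). (r i k)^2)"
  define row_sq_sum where "row_sq_sum = (\<Sum>i\<in>(UNIV :: 'n set). (A i)^2)"
  have "(\<Sum>i\<in>UNIV. \<Sum>k\<in>UNIV. (stretched d r $ i $ k)^2)
      = (\<Sum>i\<in>UNIV. (D + 1)^2 * (\<Sum>k\<in>UNIV. (r i k)^2) - 2 * (D + 1) * (A i / D) * A i + D^2 * (A i / D)^2)"
    by (intro sum.cong refl)
      (simp add: stretched_def sum_power2_affine A_def D_def real_card mult.commute[of "1 / real d"])
  also have "\<dots> = (\<Sum>i\<in>UNIV. (D + 1)^2 * (\<Sum>k\<in>UNIV. (r i k)^2) - (D + 2) / D * (A i)^2)"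
    using D by (intro sum.cong refl) (simp add: divide_simps power2_eq_square algebra_simps)
  also have "\<dots> = (D + 1)^2 * sq_sum - (D + 2) / D * row_sq_sum"
    by (simp add: sq_sum_def row_sq_sum_def sum_subtractf sum_distrib_left)
  finally have expand: "(\<Sum>i\<in>UNIV. \<Sum>k\<in>UNIV. (stretched d r $ i $ k)^2) = (D + 1)^2 * sq_sum - (D + 2) / D * row_sq_sum" .
  have "sq_sum = (\<Sum>k\<in>UNIV. \<Sum>i\<in>UNIV. (r i k)^2)"
    unfolding sq_sum_def by (rule sum.swap)
  also have "\<dots> \<le> (\<Sum>k\<in>(UNIV :: 'n set). 2 / (D * (D + 1)))"
    by (intro sum_mono) (simp add: sq D_def)
  finally have "sq_sum \<le> D^2 * (2 / (D * (D + 1)))"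
    by (simp add: real_card D_def)
  then have "(D + 1)^2 * sq_sum \<le> (D + 1)^2 * (D^2 * (2 / (D * (D + 1))))"
    by (rule mult_left_mono) simp
  also have "\<dots> = 2 * D * (D + 1)"
    using D by (simp add: divide_simps power2_eq_square)
  finally have sq_sum_le: "(D + 1)^2 * sq_sum \<le> 2 * D * (D + 1)" .
  have sumA: "(\<Sum>i\<in>UNIV. A i) = D^2"
    unfolding A_def by (subst sum.swap) (simp add: sum1 real_card D_def)
  have "0 \<le> (\<Sum>i\<in>(UNIV :: 'n set). (A i - 1)^2)"
    by (intro sum_nonneg) simp
  also have "\<dots> = row_sq_sum - 2 * (\<Sum>i\<in>UNIV. A i) + D^2"
    by (simp add: row_sq_sum_def power2_diff sum_subtractf sum.distrib sum_distrib_left real_card D_def)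
  finally have "D^2 \<le> row_sq_sum"
    using sumA by simp
  then have "(D + 2) / D * D^2 \<le> (D + 2) / D * row_sq_sum"
    using D by (intro mult_left_mono) auto
  moreover have "(D + 2) / D * D^2 = D * (D + 2)"
    using D by (simp add: power2_eq_square)
  ultimately have "(D + 1)^2 * sq_sum - (D + 2) / D * row_sq_sum \<le> D^2"
    using sq_sum_le by (simp add: power2_eq_square algebra_simps)
  then show ?thesis
    using expand by (simp add: D_def)
qed

lemma stretched_in_symmetries:
  fixes Q :: "(real^'n) set"
  assumes Q: "qplex d Q" and r: "Q_preserving d Q r"
  shows "stretched d r \<in> symmetries Q"
proof -
  define R where "R = stretched d r"
  have img: "meas_apply d r ` Q = Q"
    using r by (simp add: Q_preserving_def)
  have meas_R: "meas_apply d r x = R *v x" if "x \<in> Q" for x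
    unfolding R_def by (rule meas_apply_eq_stretched[OF qplex_memberD(1)[OF Q that]])
  have R_img: "(\<lambda>x. R *v x) ` Q = Q"
    using img meas_R by (simp cong: image_cong)
  have column_Q: "(\<chi> i. r i k) \<in> Q" for k
    using img basis_point_in_qplex[OF Q, of k] by (metis imageI meas_apply_basis_point)
  obtain q where q_Q: "\<And>k. q k \<in> Q" and Rq: "\<And>k. R *v q k = basis_point d k"
  proof -
    have "\<forall>k. \<exists>x\<in>Q. basis_point d k = R *v x"
      using R_img basis_point_in_qplex[OF Q] by blast
    then show thesis
      using that by metis
  qed
  define S where "S = stretched d (\<lambda>i k. q k $ i)"
  have RS: "R ** S = mat 1"
    by (simp add: vec_eq_iff mat_def S_def matrix_mul_stretched Rq sum_basis_point_index basis_point_scaled)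
  have "(\<Sum>i\<in>UNIV. \<Sum>k\<in>UNIV. (R $ i $ k)^2) \<le> real CARD('n)"
    unfolding R_def real_card using qplex_memberD[OF Q column_Q]
    by (intro stretched_frobenius_le) (simp_all add: hypH_def norm_vec_power2)
  moreover have "(\<Sum>i\<in>UNIV. \<Sum>k\<in>UNIV. (S $ i $ k)^2) \<le> real CARD('n)"
    unfolding S_def real_card using qplex_memberD[OF Q q_Q]
    by (intro stretched_frobenius_le) (simp_all add: hypH_def norm_vec_power2)
  ultimately have S: "S = transpose R"
    using RS by (rule right_inverse_eq_transpose[rotated])
  then have "orthogonal_matrix R"
    using RS matrix_left_right_inverse by (auto simp: orthogonal_matrix_def)
  moreover have "(\<Sum>k\<in>UNIV. R $ i $ k) = 1" for i
    using stretched_column_sum[of "\<lambda>i k. q k $ i" i] qplex_memberD(1)[OF Q q_Q]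
    by (simp add: hypH_def flip: S_def) (simp add: S transpose_def)
  ultimately show ?thesis
    using R_img by (simp add: symmetries_def matrix_vector_mult_centerC_eq_iff flip: R_def)
qed

lemma symmetries_entry_nonneg:
  fixes Q :: "(real^'n) set"
  assumes Q: "qplex d Q" and M: "M \<in> symmetries Q"
  shows "0 \<le> (M $ i $ j + 1 / real d) / (real d + 1)"
proof -
  have "transpose M *v basis_point d i \<in> Q"
    by (rule symmetries_mult_mem[OF symmetries_transpose[OF M] basis_point_in_qplex[OF Q]])
  then have "0 \<le> (transpose M *v basis_point d i) $ j"
    by (rule qplex_memberD(2)[OF Q])
  moreover have "orthogonal_matrix M" "M *v centerC = centerC"
    using M by (simp_all add: symmetries_def)
  ultimately show ?thesis
    by (simp add: transpose_mult_basis_point_nth)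
qed

lemma symmetries_subset_pres_group:
  fixes Q :: "(real^'n) set"
  assumes Q: "qplex d Q" and M: "M \<in> symmetries Q"
  shows "M \<in> pres_group d Q"
proof -
  have orth: "orthogonal_matrix M" and fix_c: "M *v centerC = centerC" and img: "(\<lambda>x. M *v x) ` Q = Q"
    using M by (auto simp: symmetries_def)
  define r where "r i j = (M $ i $ j + 1 / real d) / (real d + 1)" for i j
  have row_sum: "(\<Sum>k\<in>UNIV. r i k) = 1" for i
    unfolding r_def using fix_c by (intro sum_shifted_entries) (simp add: matrix_vector_mult_centerC_eq_iff)
  have "measurement r"
    unfolding measurement_def r_def using symmetries_entry_nonneg[OF Q M]
    by (simp add: sum_shifted_entries orthogonal_matrix_column_sum[OF orth fix_c])
  moreover have stretched_r: "stretched d r = M"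
    by (simp add: vec_eq_iff stretched_def row_sum) (simp add: r_def)
  moreover have "meas_apply d r ` Q = Q"
    using img meas_apply_eq_stretched[OF qplex_memberD(1)[OF Q]] stretched_r by (simp cong: image_cong)
  ultimately show ?thesis
    by (auto simp: pres_group_def Q_preserving_def)
qed

lemma pres_group_eq_symmetries:
  fixes Q :: "(real^'n) set"
  assumes "qplex d Q"
  shows "pres_group d Q = symmetries Q"
proof
  show "pres_group d Q \<subseteq> symmetries Q"
    unfolding pres_group_def using stretched_in_symmetries[OF assms] by blast
  show "symmetries Q \<subseteq> pres_group d Q"
    using symmetries_subset_pres_group[OF assms] by blast
qed

lemma orbital_germ_eq:
  assumes "\<And>S. S \<in> G \<Longrightarrow> orthogonal_matrix S \<and> S *v centerC = centerC"
  shows "orbital_germ d G = {transpose S *v basis_point d i | S i. S \<in> (G :: (real^'n^'n) set)}"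
proof -
  have eq: "(\<chi> j. (real d * S $ i $ j + 1) / (real d * (real d + 1))) = transpose S *v basis_point d i"
    if "S \<in> G" for S i
    using assms[OF that] transpose_mult_basis_point by simp
  show ?thesis
  proof (intro set_eqI iffI)
    fix x assume "x \<in> orbital_germ d G"
    then obtain S i where "S \<in> G" "x = (\<chi> j. (real d * S $ i $ j + 1) / (real d * (real d + 1)))"
      by (auto simp: orbital_germ_def)
    with eq show "x \<in> {transpose S *v basis_point d i | S i. S \<in> G}"
      by blast
  next
    fix x assume "x \<in> {transpose S *v basis_point d i | S i. S \<in> G}"
    then obtain S i where S: "S \<in> G" "x = transpose S *v basis_point d i"
      by blast
    then have "x = (\<chi> j. (real d * S $ i $ j + 1) / (real d * (real d + 1)))"
      using eq by simp
    with S(1) show "x \<in> orbital_germ d G"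
      unfolding orbital_germ_def by blast
  qed
qed

lemma symmetries_stochastic:
  fixes Q :: "(real^'n) set"
  assumes "qplex d Q"
  shows "stochastic d (symmetries Q)"
proof -
  have orth: "orthogonal_matrix M" and fix_c: "M *v centerC = centerC" if "M \<in> symmetries Q" for M
    using that by (simp_all add: symmetries_def)
  have inv: "matrix_inv M \<in> symmetries Q" if "M \<in> symmetries Q" for M
    using symmetries_transpose[OF that] matrix_inv_orthogonal[OF orth[OF that]] by simp
  have entry: "- 1 / real d \<le> M $ i $ j" if "M \<in> symmetries Q" for M i j
  proof -
    have "0 \<le> M $ i $ j + 1 / real d"
      using symmetries_entry_nonneg[OF assms that, of i j] d_pos by (simp add: zero_le_divide_iff)
    then show ?thesis
      by simp
  qed
  show ?thesis
    unfolding stochastic_def orth_subgroup_def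
    by (intro conjI ballI allI orth fix_c entry inv mat1_in_symmetries symmetries_mult)
qed

lemma stochastic_inner_basis_point_ge:
  assumes G: "stochastic d G" and Z: "Z \<in> G"
  shows "1 / (real d * (real d + 1)) \<le> inner (basis_point d k) (Z *v basis_point d k :: real^'n)"
proof -
  have inner_eq: "inner (basis_point d k) (Z *v basis_point d k) = ((Z *v basis_point d k) $ k + 1 / real d) / (real d + 1)"
    using stochastic_hypH[OF G Z basis_point_hypH] by (rule inner_basis_point)
  have "(Z *v basis_point d k) $ k = (Z $ k $ k + 1 / real d) / (real d + 1)"
    using stochastic_memD(2)[OF G Z]
    by (intro matrix_vector_mult_basis_point_nth) (simp add: matrix_vector_mult_centerC_eq_iff)
  moreover have "- 1 / real d \<le> Z $ k $ k"
    by (rule stochastic_memD(3)[OF G Z])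
  then have "0 \<le> Z $ k $ k + 1 / real d"
    by simp
  ultimately have "0 \<le> (Z *v basis_point d k) $ k"
    by simp
  then have "1 / real d / (real d + 1) \<le> ((Z *v basis_point d k) $ k + 1 / real d) / (real d + 1)"
    using d_pos by (intro divide_right_mono) auto
  then show ?thesis
    unfolding inner_eq by simp
qed

lemma extreme_points_basis_point_orbit:
  fixes Q :: "(real^'n) set"
  assumes Q: "qplex d Q" and orbit: "{x. x extreme_point_of Q} = {R *v x0 | R. R \<in> symmetries Q}"
  shows "{x. x extreme_point_of Q} = {S *v basis_point d k | S. S \<in> symmetries Q}"
proof -
  obtain R0 where "R0 \<in> symmetries Q" "basis_point d k = R0 *v x0"
    using basis_point_extreme_point[OF Q, of k] orbit by blast
  then show ?thesis
    using orbit orbit_symmetries_eq[of R0 Q "basis_point d k" x0] by simp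
qed

lemma convex_hull_orbital_germ:
  fixes Q :: "(real^'n) set"
  assumes Q: "qplex d Q"
    and extreme: "{x. x extreme_point_of Q} = {S *v basis_point d k | S. S \<in> symmetries Q}"
  shows "convex hull (orbital_germ d (symmetries Q)) = Q"
proof -
  have germ: "orbital_germ d (symmetries Q) = {transpose S *v basis_point d i | S i. S \<in> symmetries Q}"
    by (rule orbital_germ_eq) (simp add: symmetries_def)
  have "orbital_germ d (symmetries Q) \<subseteq> Q"
    by (auto simp: germ symmetries_mult_mem symmetries_transpose basis_point_in_qplex[OF Q])
  then have "convex hull (orbital_germ d (symmetries Q)) \<subseteq> Q"
    using qplex_compact_convex[OF Q] by (simp add: hull_minimal)
  moreover have "{x. x extreme_point_of Q} \<subseteq> orbital_germ d (symmetries Q)"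
  proof
    fix x assume "x \<in> {x. x extreme_point_of Q}"
    then obtain S where S: "S \<in> symmetries Q" "x = transpose (transpose S) *v basis_point d k"
      unfolding extreme by auto
    with symmetries_transpose[OF S(1)] show "x \<in> orbital_germ d (symmetries Q)"
      unfolding germ by blast
  qed
  then have "convex hull {x. x extreme_point_of Q} \<subseteq> convex hull (orbital_germ d (symmetries Q))"
    by (rule hull_mono)
  then have "Q \<subseteq> convex hull (orbital_germ d (symmetries Q))"
    using Krein_Milman_Minkowski[of Q] qplex_compact_convex[OF Q] by simp
  ultimately show ?thesis
    by blast
qed

lemma stochastic_extension_image_subset:
  fixes Q :: "(real^'n) set"
  assumes Q: "qplex d Q"
    and extreme: "{x. x extreme_point_of Q} = {S *v basis_point d k | S. S \<in> symmetries Q}"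
    and G: "stochastic d G" "symmetries Q \<subseteq> G" and T: "T \<in> G"
  shows "(\<lambda>x. T *v x) ` Q \<subseteq> Q"
proof -
  let ?u = "basis_point d k :: real^'n" and ?E = "{x. x extreme_point_of Q}"
  have KM: "convex hull ?E = Q"
    using Krein_Milman_Minkowski qplex_compact_convex[OF Q] by blast
  have extreme_G: "\<exists>S\<in>G. v = S *v ?u" if "v \<in> ?E" for v
    using that G(2) unfolding extreme by blast
  have Wu_Q: "W *v ?u \<in> Q" if W: "W \<in> G" for W
  proof -
    have "?E \<subseteq> {v. 1 / (real d * (real d + 1)) \<le> inner (W *v ?u) v}"
    proof
      fix v assume "v \<in> ?E"
      then obtain S where S: "S \<in> G" "v = S *v ?u"
        using extreme_G by blast
      have "1 / (real d * (real d + 1)) \<le> inner ?u ((transpose W ** S) *v ?u)"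
        by (intro stochastic_inner_basis_point_ge[OF G(1)] stochastic_mult[OF G(1)]
            stochastic_transpose[OF G(1) W] S(1))
      also have "\<dots> = inner (W *v ?u) v"
        unfolding S(2) inner_matrix_vector_mult matrix_vector_mul_assoc ..
      finally show "v \<in> {v. 1 / (real d * (real d + 1)) \<le> inner (W *v ?u) v}"
        by simp
    qed
    then have "convex hull ?E \<subseteq> {v. 1 / (real d * (real d + 1)) \<le> inner (W *v ?u) v}"
      by (rule hull_minimal) (rule convex_halfspace_ge)
    moreover have "W *v ?u \<in> hypH"
      by (rule stochastic_hypH[OF G(1) W basis_point_hypH])
    ultimately have "W *v ?u \<in> polarQ d Q"
      unfolding KM polarQ_def by blast
    with Q show ?thesis
      by (simp add: qplex_def)
  qed
  have "(\<lambda>x. T *v x) ` ?E \<subseteq> Q"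
  proof
    fix y assume "y \<in> (\<lambda>x. T *v x) ` ?E"
    then obtain S where "S \<in> G" "y = T *v (S *v ?u)"
      using extreme_G by blast
    then show "y \<in> Q"
      using Wu_Q[OF stochastic_mult[OF G(1) T]] by (simp only: matrix_vector_mul_assoc)
  qed
  then have "convex hull ((\<lambda>x. T *v x) ` ?E) \<subseteq> Q"
    using qplex_compact_convex(2)[OF Q] by (rule hull_minimal)
  then show ?thesis
    unfolding convex_hull_linear_image[OF matrix_vector_mul_linear, symmetric] KM .
qed

lemma stochastic_extension_eq_symmetries:
  fixes Q :: "(real^'n) set"
  assumes Q: "qplex d Q"
    and extreme: "{x. x extreme_point_of Q} = {S *v basis_point d k | S. S \<in> symmetries Q}"
    and G: "stochastic d G" "symmetries Q \<subseteq> G"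
  shows "G = symmetries Q"
proof
  show "G \<subseteq> symmetries Q"
  proof
    fix T assume T: "T \<in> G"
    have orth: "orthogonal_matrix T" and fix_c: "T *v centerC = centerC"
      using stochastic_memD[OF G(1) T] by simp_all
    have image_T: "(\<lambda>x. T *v x) ` Q \<subseteq> Q"
      by (rule stochastic_extension_image_subset[OF Q extreme G T])
    have image_TT: "(\<lambda>x. transpose T *v x) ` Q \<subseteq> Q"
      by (rule stochastic_extension_image_subset[OF Q extreme G stochastic_transpose[OF G(1) T]])
    have "Q \<subseteq> (\<lambda>x. T *v x) ` Q"
    proof
      fix x assume "x \<in> Q"
      then have "transpose T *v x \<in> Q"
        using image_TT by blast
      then show "x \<in> (\<lambda>x. T *v x) ` Q"
        by (rule rev_image_eqI) (simp add: orthogonal_matrix_transpose_cancel(2)[OF orth])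
    qed
    with image_T orth fix_c show "T \<in> symmetries Q"
      by (simp add: symmetries_def)
  qed
qed (rule G(2))

end

theorem mainTheorem16:
  fixes d :: nat and Q :: "(real^'n) set"
  assumes "d \<ge> 2" and "CARD('n) = d^2"
    and "qplex d Q"
    and "\<exists>x0. x0 extreme_point_of Q \<and>
           {x. x extreme_point_of Q} = {R *v x0 | R. R \<in> pres_group d Q}"
  shows "strongly_maximal d (pres_group d Q)"
proof -
  fix k :: 'n
  have d_pos: "0 < d"
    using assms(1) by simp
  note G_eq = pres_group_eq_symmetries[OF d_pos assms(2,3)]
  obtain x0 where "{x. x extreme_point_of Q} = {R *v x0 | R. R \<in> symmetries Q}"
    using assms(4) by (auto simp: G_eq)
  then have extreme: "{x. x extreme_point_of Q} = {S *v basis_point d k | S. S \<in> symmetries Q}"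
    by (rule extreme_points_basis_point_orbit[OF d_pos assms(2,3)])
  have "closure (convex hull orbital_germ d (symmetries Q)) = Q"
    using convex_hull_orbital_germ[OF d_pos assms(2,3) extreme] qplex_compact_convex[OF assms(3)]
    by (simp add: compact_imp_closed)
  then show ?thesis
    using assms(3) symmetries_stochastic[OF d_pos assms(2,3)]
      stochastic_extension_eq_symmetries[OF d_pos assms(2,3) extreme]
    by (auto simp: strongly_maximal_def maximal_stochastic_def G_eq)
qed

end
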